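(* Let $(M,\circ,e)$ be an $F$-manifold and $\mathcal E$ an invertible vector field on $M$. (i) $\mathcal E$ is an eventual identity if and only if $$L_{\mathcal E}(\circ)(X,Y)=[e,\mathcal E]\circ X\circ Y\qquad\text{for all vector fields }X,Y \text{ on } M.$$ (ii) Suppose $\mathcal E$ is an eventual identity, and let $X*Y:=X\circ Y\circ\mathcal E^{-1}$ be the new $F$-manifold multiplication, whose unit is $\mathcal E$. Then $e$ is an eventual identity of the $F$-manifold $(M,*,\mathcal E)$. Moreover, the multiplication obtained by dualizing $(M,*,\mathcal E)$ with respect to $e$ is again $\circ$, i.e. $X*Y*e^{-1_*}=X\circ Y$, where $e^{-1_*}$ is the $*$-inverse of $e$. Hence $(M,\circ,e,\mathcal E)\mapsto(M,*,\mathcal E,e)$ is an involutive correspondence between $F$-manifolds with eventual identities.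
   Context: An $F$-manifold $(M,\circ,e)$ is a smooth manifold $M$ together with a commutative, associative, $C^\infty(M)$-bilinear multiplication $\circ$ on $TM$ with unit vector field $e$, such that $$L_{X\circ Y}(\circ)=X\circ L_Y(\circ)+Y\circ L_X(\circ)$$ for all vector fields $X,Y$. Here $$L_Z(\circ)(X,Y):=[Z,X\circ Y]-[Z,X]\circ Y-X\circ[Z,Y].$$ A vector field $\mathcal E$ is invertible if there is a vector field $\mathcal E^{-1}$ with $\mathcal E\circ\mathcal E^{-1}=e$ everywhere on $M$. An eventual identity on $(M,\circ,e)$ is an invertible vector field $\mathcal E$ such that the multiplication $X*Y:=X\circ Y\circ\mathcal E^{-1}$ defines an $F$-manifold structure on $M$ (its unit is $\mathcal E$). *)

theory Defs
  imports "HOL-Analysis.Analysis"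
begin

fun Ck_on :: "nat \<Rightarrow> ('b::euclidean_space \<Rightarrow> 'c::real_normed_vector) \<Rightarrow> 'b set \<Rightarrow> bool" where
  "Ck_on 0 f S = continuous_on S f"
| "Ck_on (Suc k) f S =
     (f differentiable_on S \<and> (\<forall>v. Ck_on k (\<lambda>x. frechet_derivative f (at x) v) S))"

definition smooth_on :: "('b::euclidean_space \<Rightarrow> 'c::real_normed_vector) \<Rightarrow> 'b set \<Rightarrow> bool" where
  "smooth_on f S \<longleftrightarrow> (\<forall>k. Ck_on k f S)"

definition chart :: "'a::topological_space set \<Rightarrow> ('a \<Rightarrow> 'b::euclidean_space) \<Rightarrow> bool" where
  "chart U \<phi> \<longleftrightarrow> open U \<and> inj_on \<phi> U \<and> continuous_on U \<phi> \<and> open (\<phi> ` U)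
     \<and> continuous_on (\<phi> ` U) (inv_into U \<phi>)"

text \<open>A smooth atlas on the whole space 'a (the manifold is the type 'a, which is
  required to be Hausdorff and second countable in the theorem).\<close>
definition smooth_atlas :: "('a::topological_space set \<times> ('a \<Rightarrow> 'b::euclidean_space)) set \<Rightarrow> bool" where
  "smooth_atlas A \<longleftrightarrow>
     (\<forall>(U,\<phi>)\<in>A. chart U \<phi>) \<and> (\<Union>(fst ` A) = UNIV) \<and>
     (\<forall>(U,\<phi>)\<in>A. \<forall>(V,\<psi>)\<in>A. smooth_on (\<psi> \<circ> inv_into U \<phi>) (\<phi> ` (U \<inter> V)))"

definition Cinf :: "('a set \<times> ('a \<Rightarrow> 'b::euclidean_space)) set \<Rightarrow> ('a \<Rightarrow> real) set" where
  "Cinf A = {f. \<forall>(U,\<phi>)\<in>A. smooth_on (f \<circ> inv_into U \<phi>) (\<phi> ` U)}"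

type_synonym 'a vfield = "('a \<Rightarrow> real) \<Rightarrow> ('a \<Rightarrow> real)"

text \<open>A (smooth) vector field is an R-linear derivation of the algebra C-infinity(M);
  for definiteness it is extended by 0 outside C-infinity(M).\<close>
definition vector_field :: "('a set \<times> ('a \<Rightarrow> 'b::euclidean_space)) set \<Rightarrow> 'a vfield \<Rightarrow> bool" where
  "vector_field A X \<longleftrightarrow>
     (\<forall>f\<in>Cinf A. X f \<in> Cinf A) \<and>
     (\<forall>f. f \<notin> Cinf A \<longrightarrow> X f = (\<lambda>x. 0)) \<and>
     (\<forall>f\<in>Cinf A. \<forall>g\<in>Cinf A. X (\<lambda>x. f x + g x) = (\<lambda>x. X f x + X g x)) \<and>
     (\<forall>f\<in>Cinf A. \<forall>c::real. X (\<lambda>x. c * f x) = (\<lambda>x. c * X f x)) \<and>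
     (\<forall>f\<in>Cinf A. \<forall>g\<in>Cinf A. X (\<lambda>x. f x * g x) = (\<lambda>x. f x * X g x + g x * X f x))"

definition vadd :: "'a vfield \<Rightarrow> 'a vfield \<Rightarrow> 'a vfield" where
  "vadd X Y = (\<lambda>f x. X f x + Y f x)"

definition vdiff :: "'a vfield \<Rightarrow> 'a vfield \<Rightarrow> 'a vfield" where
  "vdiff X Y = (\<lambda>f x. X f x - Y f x)"

definition fscale :: "('a set \<times> ('a \<Rightarrow> 'b::euclidean_space)) set \<Rightarrow> ('a \<Rightarrow> real) \<Rightarrow> 'a vfield \<Rightarrow> 'a vfield" where
  "fscale A g X = (\<lambda>f. if f \<in> Cinf A then (\<lambda>x. g x * X f x) else (\<lambda>x. 0))"

definition lie :: "('a set \<times> ('a \<Rightarrow> 'b::euclidean_space)) set \<Rightarrow> 'a vfield \<Rightarrow> 'a vfield \<Rightarrow> 'a vfield" where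
  "lie A X Y = (\<lambda>f. if f \<in> Cinf A then (\<lambda>x. X (Y f) x - Y (X f) x) else (\<lambda>x. 0))"

definition Lie_mult :: "('a set \<times> ('a \<Rightarrow> 'b::euclidean_space)) set \<Rightarrow> ('a vfield \<Rightarrow> 'a vfield \<Rightarrow> 'a vfield)
    \<Rightarrow> 'a vfield \<Rightarrow> 'a vfield \<Rightarrow> 'a vfield \<Rightarrow> 'a vfield" where
  "Lie_mult A pr Z X Y =
     vdiff (vdiff (lie A Z (pr X Y)) (pr (lie A Z X) Y)) (pr X (lie A Z Y))"

definition F_manifold :: "('a::{t2_space,second_countable_topology} set \<times> ('a \<Rightarrow> 'b::euclidean_space)) set
    \<Rightarrow> ('a vfield \<Rightarrow> 'a vfield \<Rightarrow> 'a vfield) \<Rightarrow> 'a vfield \<Rightarrow> bool" where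
  "F_manifold A pr e \<longleftrightarrow>
     smooth_atlas A \<and>
     (\<forall>X Y. vector_field A X \<longrightarrow> vector_field A Y \<longrightarrow> vector_field A (pr X Y)) \<and>
     (\<forall>X Y. vector_field A X \<longrightarrow> vector_field A Y \<longrightarrow> pr X Y = pr Y X) \<and>
     (\<forall>X Y Z. vector_field A X \<longrightarrow> vector_field A Y \<longrightarrow> vector_field A Z \<longrightarrow>
        pr (pr X Y) Z = pr X (pr Y Z)) \<and>
     (\<forall>g\<in>Cinf A. \<forall>X Y Z. vector_field A X \<longrightarrow> vector_field A Y \<longrightarrow> vector_field A Z \<longrightarrow>
        pr (vadd (fscale A g X) Y) Z = vadd (fscale A g (pr X Z)) (pr Y Z)) \<and>
     vector_field A e \<and>
     (\<forall>X. vector_field A X \<longrightarrow> pr e X = X) \<and>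
     (\<forall>X Y Z W. vector_field A X \<longrightarrow> vector_field A Y \<longrightarrow> vector_field A Z \<longrightarrow> vector_field A W \<longrightarrow>
        Lie_mult A pr (pr X Y) Z W =
          vadd (pr X (Lie_mult A pr Y Z W)) (pr Y (Lie_mult A pr X Z W)))"

definition invertible_vf :: "('a set \<times> ('a \<Rightarrow> 'b::euclidean_space)) set
    \<Rightarrow> ('a vfield \<Rightarrow> 'a vfield \<Rightarrow> 'a vfield) \<Rightarrow> 'a vfield \<Rightarrow> 'a vfield \<Rightarrow> bool" where
  "invertible_vf A pr e E \<longleftrightarrow> vector_field A E \<and> (\<exists>Y. vector_field A Y \<and> pr E Y = e)"

text \<open>The inverse of an invertible vector field (unique by associativity).\<close>
definition vinv :: "('a set \<times> ('a \<Rightarrow> 'b::euclidean_space)) set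
    \<Rightarrow> ('a vfield \<Rightarrow> 'a vfield \<Rightarrow> 'a vfield) \<Rightarrow> 'a vfield \<Rightarrow> 'a vfield \<Rightarrow> 'a vfield" where
  "vinv A pr e E = (SOME Y. vector_field A Y \<and> pr E Y = e)"

definition dual_mult :: "('a set \<times> ('a \<Rightarrow> 'b::euclidean_space)) set
    \<Rightarrow> ('a vfield \<Rightarrow> 'a vfield \<Rightarrow> 'a vfield) \<Rightarrow> 'a vfield \<Rightarrow> 'a vfield \<Rightarrow> ('a vfield \<Rightarrow> 'a vfield \<Rightarrow> 'a vfield)" where
  "dual_mult A pr e E = (\<lambda>X Y. pr (pr X Y) (vinv A pr e E))"

definition eventual_identity :: "('a::{t2_space,second_countable_topology} set \<times> ('a \<Rightarrow> 'b::euclidean_space)) set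
    \<Rightarrow> ('a vfield \<Rightarrow> 'a vfield \<Rightarrow> 'a vfield) \<Rightarrow> 'a vfield \<Rightarrow> 'a vfield \<Rightarrow> bool" where
  "eventual_identity A pr e E \<longleftrightarrow>
     invertible_vf A pr e E \<and> F_manifold A (dual_mult A pr e E) E"

end

theory Submission
  imports Defs "HOL-Library.Function_Algebras"
begin

(* Write P for the inverse of the invertible field E and X * Y = X o Y o P for the
   dual product.  Everything except the F-identity for * is inherited from o, so
   E is an eventual identity iff * satisfies the F-identity.  Using that the unit
   is Lie-flat (L_e = 0) and hence L_P = -P o P o L_E, the defect of the
   F-identity for * equals -P o P o Q(X,Y,Z,W) for an explicit obstruction Q built
   from L_E; Q vanishes identically iff L_E(X,Y) = [e,E] o X o Y.  For part (ii),
   the *-inverse of e is E o E, so dualizing * by e returns o on vector fields,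
   and an F-manifold structure only depends on the product of vector fields. *)

section \<open>Smooth functions form an algebra\<close>

lemma frechet_derivative_cong_open:
  assumes "open S" "x \<in> S" "\<forall>y\<in>S. f y = g y"
  shows "frechet_derivative f (at x) = frechet_derivative g (at x)"
proof -
  have "\<And>f'. (f has_derivative f') (at x) \<longleftrightarrow> (g has_derivative f') (at x)"
    using assms by (metis has_derivative_transform_within_open)
  thus ?thesis unfolding frechet_derivative_def by simp
qed

lemma Ck_on_cong:
  fixes f g :: "'b::euclidean_space \<Rightarrow> 'c::real_normed_vector"
  assumes "open S" "\<forall>x\<in>S. f x = g x"
  shows "Ck_on k f S = Ck_on k g S"
  using assms(2)
proof (induction k arbitrary: f g)
  case 0 thus ?case using continuous_on_cong[of S S f g] by auto
next
  case (Suc k)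
  have "f differentiable_on S \<longleftrightarrow> g differentiable_on S"
    using Suc.prems unfolding differentiable_on_def differentiable_def
    by (metis has_derivative_transform)
  moreover have "Ck_on k (\<lambda>x. frechet_derivative f (at x) v) S
      = Ck_on k (\<lambda>x. frechet_derivative g (at x) v) S" for v
    by (rule Suc.IH) (use frechet_derivative_cong_open[OF assms(1) _ Suc.prems] in simp)
  ultimately show ?case by simp
qed

lemma Ck_on_Suc_imp: "Ck_on (Suc k) f S \<Longrightarrow> Ck_on k f S"
  by (induction k arbitrary: f) (simp_all add: differentiable_imp_continuous_on)

lemma Ck_on_const: "Ck_on k (\<lambda>x. c) S"
proof (induction k arbitrary: c)
  case (Suc k)
  have "frechet_derivative (\<lambda>x. c) (at x) = (\<lambda>v. 0)" for x
    by (metis frechet_derivative_at has_derivative_const)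
  thus ?case using Suc by simp
qed simp

lemma Ck_on_add:
  fixes f g :: "'b::euclidean_space \<Rightarrow> 'c::real_normed_vector"
  assumes "open S"
  shows "Ck_on k f S \<Longrightarrow> Ck_on k g S \<Longrightarrow> Ck_on k (\<lambda>x. f x + g x) S"
proof (induction k arbitrary: f g)
  case 0 thus ?case by (simp add: continuous_on_add)
next
  case (Suc k)
  have df: "f differentiable_on S" and dg: "g differentiable_on S" using Suc.prems by auto
  have sum_rule: "\<forall>x\<in>S. frechet_derivative (\<lambda>x. f x + g x) (at x) v
      = frechet_derivative f (at x) v + frechet_derivative g (at x) v" for v
  proof
    fix x assume x: "x \<in> S"
    have "f differentiable at x" "g differentiable at x"
      using df dg x assms differentiable_on_eq_differentiable_at by blast+
    hence "((\<lambda>x. f x + g x) has_derivative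
        (\<lambda>v. frechet_derivative f (at x) v + frechet_derivative g (at x) v)) (at x)"
      by (intro has_derivative_add) (simp_all add: frechet_derivative_works[symmetric])
    from frechet_derivative_at[OF this] show "frechet_derivative (\<lambda>x. f x + g x) (at x) v
      = frechet_derivative f (at x) v + frechet_derivative g (at x) v" by metis
  qed
  have "Ck_on k (\<lambda>x. frechet_derivative (\<lambda>x. f x + g x) (at x) v) S" for v
    using Ck_on_cong[OF assms sum_rule[of v]] Suc by simp
  thus ?case using df dg by simp
qed

lemma Ck_on_mult:
  fixes f g :: "'b::euclidean_space \<Rightarrow> real"
  assumes "open S"
  shows "Ck_on k f S \<Longrightarrow> Ck_on k g S \<Longrightarrow> Ck_on k (\<lambda>x. f x * g x) S"
proof (induction k arbitrary: f g)
  case 0 thus ?case by (simp add: continuous_on_mult)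
next
  case (Suc k)
  have df: "f differentiable_on S" and dg: "g differentiable_on S" using Suc.prems by auto
  have product_rule: "\<forall>x\<in>S. frechet_derivative (\<lambda>x. f x * g x) (at x) v
      = f x * frechet_derivative g (at x) v + frechet_derivative f (at x) v * g x" for v
  proof
    fix x assume x: "x \<in> S"
    have "f differentiable at x" "g differentiable at x"
      using df dg x assms differentiable_on_eq_differentiable_at by blast+
    hence "((\<lambda>x. f x * g x) has_derivative
        (\<lambda>v. f x * frechet_derivative g (at x) v + frechet_derivative f (at x) v * g x)) (at x)"
      by (intro has_derivative_mult) (simp_all add: frechet_derivative_works[symmetric])
    from frechet_derivative_at[OF this] show "frechet_derivative (\<lambda>x. f x * g x) (at x) v
      = f x * frechet_derivative g (at x) v + frechet_derivative f (at x) v * g x" by metis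
  qed
  have "Ck_on k (\<lambda>x. frechet_derivative (\<lambda>x. f x * g x) (at x) v) S" for v
  proof -
    have "Ck_on k f S" "Ck_on k g S" using Suc.prems Ck_on_Suc_imp by blast+
    hence "Ck_on k (\<lambda>x. f x * frechet_derivative g (at x) v
                      + frechet_derivative f (at x) v * g x) S"
      using Suc.IH Suc.prems by (intro Ck_on_add[OF assms]) auto
    thus ?thesis using Ck_on_cong[OF assms product_rule[of v]] by simp
  qed
  thus ?case using df dg by simp
qed

lemma Cinf_iff:
  "f \<in> Cinf A \<longleftrightarrow> (\<forall>U \<phi> k. (U,\<phi>) \<in> A \<longrightarrow> Ck_on k (\<lambda>y. f (inv_into U \<phi> y)) (\<phi> ` U))"
  unfolding Cinf_def smooth_on_def comp_def by auto

lemma atlas_chart_image_open: "smooth_atlas A \<Longrightarrow> (U,\<phi>) \<in> A \<Longrightarrow> open (\<phi> ` U)"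
  unfolding smooth_atlas_def chart_def by fastforce

lemma Cinf_const[simp]: "(\<lambda>x. c) \<in> Cinf A"
  by (simp add: Cinf_iff Ck_on_const)

lemma Cinf_add[simp]:
  "smooth_atlas A \<Longrightarrow> f \<in> Cinf A \<Longrightarrow> g \<in> Cinf A \<Longrightarrow> (\<lambda>x. f x + g x) \<in> Cinf A"
  unfolding Cinf_iff using Ck_on_add[OF atlas_chart_image_open] by blast

lemma Cinf_mult[simp]:
  "smooth_atlas A \<Longrightarrow> f \<in> Cinf A \<Longrightarrow> g \<in> Cinf A \<Longrightarrow> (\<lambda>x. f x * g x) \<in> Cinf A"
  unfolding Cinf_iff using Ck_on_mult[OF atlas_chart_image_open] by blast

lemma Cinf_diff[simp]:
  assumes "smooth_atlas A" "f \<in> Cinf A" "g \<in> Cinf A"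
  shows "(\<lambda>x. f x - g x) \<in> Cinf A"
proof -
  have "(\<lambda>x. f x + (\<lambda>x. -1) x * g x) \<in> Cinf A"
    using assms by (intro Cinf_add Cinf_mult) auto
  thus ?thesis by simp
qed

lemma Cinf_scale[simp]: "smooth_atlas A \<Longrightarrow> f \<in> Cinf A \<Longrightarrow> (\<lambda>x. c * f x) \<in> Cinf A"
  using Cinf_mult[of A "\<lambda>x. c" f] by simp

lemma Cinf_plus_fun[simp]: "smooth_atlas A \<Longrightarrow> f \<in> Cinf A \<Longrightarrow> g \<in> Cinf A \<Longrightarrow> f + g \<in> Cinf A"
  and Cinf_minus_fun[simp]: "smooth_atlas A \<Longrightarrow> f \<in> Cinf A \<Longrightarrow> g \<in> Cinf A \<Longrightarrow> f - g \<in> Cinf A"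
  and Cinf_uminus_fun[simp]: "smooth_atlas A \<Longrightarrow> f \<in> Cinf A \<Longrightarrow> - f \<in> Cinf A"
  using Cinf_add[of A f g] Cinf_diff[of A f g] Cinf_scale[of A f "-1"]
  by (simp_all add: plus_fun_def fun_diff_def fun_Compl_def)

lemma Cinf_zero_fun[simp]: "(0::'a \<Rightarrow> real) \<in> Cinf A"
  using Cinf_const[of 0 A] by (simp add: zero_fun_def)

section \<open>Vector fields\<close>

lemma vf_Cinf[simp]: "vector_field A X \<Longrightarrow> f \<in> Cinf A \<Longrightarrow> X f \<in> Cinf A"
  and vf_outside: "vector_field A X \<Longrightarrow> f \<notin> Cinf A \<Longrightarrow> X f = (\<lambda>x. 0)"
  and vf_add_fun[simp]: "vector_field A X \<Longrightarrow> f \<in> Cinf A \<Longrightarrow> g \<in> Cinf A \<Longrightarrow>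
      X (\<lambda>x. f x + g x) = (\<lambda>x. X f x + X g x)"
  and vf_scale_fun[simp]: "vector_field A X \<Longrightarrow> f \<in> Cinf A \<Longrightarrow> X (\<lambda>x. c * f x) = (\<lambda>x. c * X f x)"
  and vf_Leibniz[simp]: "vector_field A X \<Longrightarrow> f \<in> Cinf A \<Longrightarrow> g \<in> Cinf A \<Longrightarrow>
      X (\<lambda>x. f x * g x) = (\<lambda>x. f x * X g x + g x * X f x)"
  unfolding vector_field_def by blast+

lemma vector_fieldI:
  assumes "\<And>f. f \<in> Cinf A \<Longrightarrow> X f \<in> Cinf A"
    "\<And>f. f \<notin> Cinf A \<Longrightarrow> X f = (\<lambda>x. 0)"
    "\<And>f g. f \<in> Cinf A \<Longrightarrow> g \<in> Cinf A \<Longrightarrow> X (\<lambda>x. f x + g x) = (\<lambda>x. X f x + X g x)"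
    "\<And>f c. f \<in> Cinf A \<Longrightarrow> X (\<lambda>x. c * f x) = (\<lambda>x. c * X f x)"
    "\<And>f g. f \<in> Cinf A \<Longrightarrow> g \<in> Cinf A \<Longrightarrow> X (\<lambda>x. f x * g x) = (\<lambda>x. f x * X g x + g x * X f x)"
  shows "vector_field A X"
  unfolding vector_field_def using assms by blast

lemma vfield_plus_apply: "(X + Y) f = (\<lambda>x. X f x + Y f x)"
  and vfield_minus_apply: "(X - Y) f = (\<lambda>x. X f x - Y f x)"
  and vfield_uminus_apply: "(- X) f = (\<lambda>x. - X f x)"
  and vfield_zero_apply: "(0::'a vfield) f = (\<lambda>x. 0)"
  for X Y :: "'a vfield"
  by (simp_all add: fun_eq_iff)

lemma vf_plus[simp]: "smooth_atlas A \<Longrightarrow> vector_field A X \<Longrightarrow> vector_field A Y \<Longrightarrow> vector_field A (X + Y)"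
  by (rule vector_fieldI) (auto simp: vfield_plus_apply vf_outside algebra_simps)

lemma vf_minus[simp]: "smooth_atlas A \<Longrightarrow> vector_field A X \<Longrightarrow> vector_field A Y \<Longrightarrow> vector_field A (X - Y)"
  by (rule vector_fieldI) (auto simp: vfield_minus_apply vf_outside algebra_simps)

lemma vf_uminus[simp]: "smooth_atlas A \<Longrightarrow> vector_field A X \<Longrightarrow> vector_field A (- X)"
  by (rule vector_fieldI) (auto simp: vfield_uminus_apply vf_outside algebra_simps)

lemma vf_zero[simp]: "vector_field A 0"
  by (rule vector_fieldI) (auto simp: vfield_zero_apply)

lemma vf_fscale[simp]: "smooth_atlas A \<Longrightarrow> g \<in> Cinf A \<Longrightarrow> vector_field A X \<Longrightarrow> vector_field A (fscale A g X)"
  by (rule vector_fieldI) (auto simp: fscale_def algebra_simps)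

lemma vf_lie[simp]:
  assumes sa: "smooth_atlas A" and X: "vector_field A X" and Y: "vector_field A Y"
  shows "vector_field A (lie A X Y)"
proof (rule vector_fieldI)
  fix f g assume f: "f \<in> Cinf A" and g: "g \<in> Cinf A"
  have fg: "(\<lambda>x. f x * g x) \<in> Cinf A" using sa f g by simp
  have XY: "X (\<lambda>x. f x * Y g x + g x * Y f x)
      = (\<lambda>x. X (\<lambda>x. f x * Y g x) x + X (\<lambda>x. g x * Y f x) x)"
    by (rule vf_add_fun[OF X]) (use sa f g Y in simp_all)
  have YX: "Y (\<lambda>x. f x * X g x + g x * X f x)
      = (\<lambda>x. Y (\<lambda>x. f x * X g x) x + Y (\<lambda>x. g x * X f x) x)"
    by (rule vf_add_fun[OF Y]) (use sa f g X in simp_all)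
  have Leibniz_terms:
    "X (\<lambda>x. f x * Y g x) = (\<lambda>x. f x * X (Y g) x + Y g x * X f x)"
    "X (\<lambda>x. g x * Y f x) = (\<lambda>x. g x * X (Y f) x + Y f x * X g x)"
    "Y (\<lambda>x. f x * X g x) = (\<lambda>x. f x * Y (X g) x + X g x * Y f x)"
    "Y (\<lambda>x. g x * X f x) = (\<lambda>x. g x * Y (X f) x + X f x * Y g x)"
    using f g X Y by (simp_all add: vf_Leibniz)
  show "lie A X Y (\<lambda>x. f x * g x) = (\<lambda>x. f x * lie A X Y g x + g x * lie A X Y f x)"
    unfolding lie_def using fg f g X Y
    by (simp only: if_True vf_Leibniz XY YX Leibniz_terms) (simp add: algebra_simps)
qed (use sa X Y in \<open>auto simp: lie_def algebra_simps\<close>)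

lemma fscale_one: "vector_field A X \<Longrightarrow> fscale A (\<lambda>x. 1) X = X"
  by (auto simp: fscale_def fun_eq_iff vf_outside)

lemma vadd_eq_plus: "vadd X Y = X + Y"
  by (simp add: vadd_def fun_eq_iff)

lemma lie_antisym: "lie A X Y = - lie A Y X"
  by (simp add: lie_def fun_eq_iff)

lemma lie_self: "lie A X X = 0"
  by (simp add: lie_def fun_eq_iff)

lemma Lie_mult_eq: "Lie_mult A p Z X Y = lie A Z (p X Y) - p (lie A Z X) Y - p X (lie A Z Y)"
  by (simp add: Lie_mult_def vdiff_def fun_eq_iff)

definition F_identity :: "('a set \<times> ('a \<Rightarrow> 'b::euclidean_space)) set
    \<Rightarrow> ('a vfield \<Rightarrow> 'a vfield \<Rightarrow> 'a vfield) \<Rightarrow> bool" where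
  "F_identity A p \<longleftrightarrow>
     (\<forall>X Y Z W. vector_field A X \<longrightarrow> vector_field A Y \<longrightarrow> vector_field A Z \<longrightarrow> vector_field A W \<longrightarrow>
        Lie_mult A p (p X Y) Z W = vadd (p X (Lie_mult A p Y Z W)) (p Y (Lie_mult A p X Z W)))"

lemma F_manifold_iff:
  "F_manifold A p u \<longleftrightarrow>
     smooth_atlas A \<and>
     (\<forall>X Y. vector_field A X \<longrightarrow> vector_field A Y \<longrightarrow> vector_field A (p X Y)) \<and>
     (\<forall>X Y. vector_field A X \<longrightarrow> vector_field A Y \<longrightarrow> p X Y = p Y X) \<and>
     (\<forall>X Y Z. vector_field A X \<longrightarrow> vector_field A Y \<longrightarrow> vector_field A Z \<longrightarrow>
        p (p X Y) Z = p X (p Y Z)) \<and>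
     (\<forall>g\<in>Cinf A. \<forall>X Y Z. vector_field A X \<longrightarrow> vector_field A Y \<longrightarrow> vector_field A Z \<longrightarrow>
        p (vadd (fscale A g X) Y) Z = vadd (fscale A g (p X Z)) (p Y Z)) \<and>
     vector_field A u \<and>
     (\<forall>X. vector_field A X \<longrightarrow> p u X = X) \<and>
     F_identity A p"
  unfolding F_manifold_def F_identity_def ..

section \<open>The algebra of an F-manifold\<close>

locale FM =
  fixes A :: "('a::{t2_space,second_countable_topology} set \<times> ('a \<Rightarrow> 'b::euclidean_space)) set"
    and pr :: "'a vfield \<Rightarrow> 'a vfield \<Rightarrow> 'a vfield"
    and e :: "'a vfield"
  assumes F: "F_manifold A pr e"
begin

lemmas F_axioms = F[unfolded F_manifold_iff]

lemma atlas[simp]: "smooth_atlas A"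
  using F_axioms by blast

lemma pr_vf[simp]: "vector_field A X \<Longrightarrow> vector_field A Y \<Longrightarrow> vector_field A (pr X Y)"
  using F_axioms by blast

lemma pr_comm: "vector_field A X \<Longrightarrow> vector_field A Y \<Longrightarrow> pr X Y = pr Y X"
  using F_axioms by blast

lemma pr_assoc: "vector_field A X \<Longrightarrow> vector_field A Y \<Longrightarrow> vector_field A Z \<Longrightarrow>
    pr (pr X Y) Z = pr X (pr Y Z)"
  using F_axioms by blast

lemma pr_linear: "g \<in> Cinf A \<Longrightarrow> vector_field A X \<Longrightarrow> vector_field A Y \<Longrightarrow> vector_field A Z \<Longrightarrow>
    pr (vadd (fscale A g X) Y) Z = vadd (fscale A g (pr X Z)) (pr Y Z)"
  using F_axioms by blast

lemma unit_vf[simp]: "vector_field A e"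
  using F_axioms by blast

lemma pr_unit[simp]: "vector_field A X \<Longrightarrow> pr e X = X"
  using F_axioms by blast

lemma F_identity: "F_identity A pr"
  using F_axioms by blast

abbreviation L where "L \<equiv> Lie_mult A pr"

lemma F_identity_plus:
  "vector_field A X \<Longrightarrow> vector_field A Y \<Longrightarrow> vector_field A Z \<Longrightarrow> vector_field A W \<Longrightarrow>
   L (pr X Y) Z W = pr X (L Y Z W) + pr Y (L X Z W)"
  using F_identity unfolding F_identity_def vadd_eq_plus by blast

lemma pr_unit_right[simp]: "vector_field A X \<Longrightarrow> pr X e = X"
  using pr_comm[of X e] by simp

lemma pr_left_commute:
  "vector_field A X \<Longrightarrow> vector_field A Y \<Longrightarrow> vector_field A Z \<Longrightarrow> pr X (pr Y Z) = pr Y (pr X Z)"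
proof -
  assume vf: "vector_field A X" "vector_field A Y" "vector_field A Z"
  have "pr X (pr Y Z) = pr (pr X Y) Z" using vf by (simp add: pr_assoc)
  also have "\<dots> = pr (pr Y X) Z" using vf pr_comm[of X Y] by simp
  also have "\<dots> = pr Y (pr X Z)" using vf by (simp add: pr_assoc)
  finally show ?thesis .
qed

text \<open>Real bilinearity of the product, from C-infinity-linearity with g = 1.\<close>
lemma pr_plus_left:
  assumes "vector_field A X" "vector_field A Y" "vector_field A Z"
  shows "pr (X + Y) Z = pr X Z + pr Y Z"
  using pr_linear[of "\<lambda>x. 1" X Y Z] assms by (simp add: fscale_one vadd_eq_plus)

lemma pr_plus_right: "vector_field A X \<Longrightarrow> vector_field A Y \<Longrightarrow> vector_field A Z \<Longrightarrow>
    pr Z (X + Y) = pr Z X + pr Z Y"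
  using pr_plus_left[of X Y Z] pr_comm[of Z "X+Y"] pr_comm[of Z X] pr_comm[of Z Y] by simp

lemma pr_zero_left: "vector_field A Z \<Longrightarrow> pr 0 Z = 0"
  using pr_plus_left[of 0 0 Z] by simp

lemma pr_zero_right: "vector_field A Z \<Longrightarrow> pr Z 0 = 0"
  using pr_zero_left[of Z] pr_comm[of Z 0] by simp

lemma pr_uminus_left: "vector_field A X \<Longrightarrow> vector_field A Z \<Longrightarrow> pr (- X) Z = - pr X Z"
  using pr_plus_left[of X "-X" Z] pr_zero_left[of Z] by (simp add: eq_neg_iff_add_eq_0 add.commute)

lemma pr_uminus_right: "vector_field A X \<Longrightarrow> vector_field A Z \<Longrightarrow> pr Z (- X) = - pr Z X"
  using pr_uminus_left[of X Z] pr_comm[of Z "-X"] pr_comm[of Z X] by simp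

lemma pr_minus_left: "vector_field A X \<Longrightarrow> vector_field A Y \<Longrightarrow> vector_field A Z \<Longrightarrow>
    pr (X - Y) Z = pr X Z - pr Y Z"
  using pr_plus_left[of X "-Y" Z] pr_uminus_left[of Y Z] by simp

lemma pr_minus_right: "vector_field A X \<Longrightarrow> vector_field A Y \<Longrightarrow> vector_field A Z \<Longrightarrow>
    pr Z (X - Y) = pr Z X - pr Z Y"
  using pr_minus_left[of X Y Z] pr_comm[of Z "X-Y"] pr_comm[of Z X] pr_comm[of Z Y] by simp

lemmas pr_ring = pr_plus_left pr_plus_right pr_minus_left pr_minus_right pr_uminus_left
  pr_uminus_right pr_zero_left pr_zero_right pr_assoc pr_comm pr_left_commute

lemma L_vf[simp]: "vector_field A Z \<Longrightarrow> vector_field A X \<Longrightarrow> vector_field A Y \<Longrightarrow>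
    vector_field A (L Z X Y)"
  unfolding Lie_mult_eq by simp

text \<open>The unit is Lie-flat: the F-identity with X = Y = e gives L_e = 2 L_e.\<close>
lemma L_unit_zero:
  assumes "vector_field A U" "vector_field A V"
  shows "L e U V = 0"
proof -
  have "L (pr e e) U V = pr e (L e U V) + pr e (L e U V)"
    by (rule F_identity_plus) (use assms in simp_all)
  moreover have "pr e e = e" "pr e (L e U V) = L e U V" using assms by simp_all
  ultimately have "L e U V = L e U V + L e U V" by simp
  thus ?thesis by (metis add_cancel_right_right)
qed

lemma F_manifold_cong:
  assumes p: "\<And>X Y. vector_field A X \<Longrightarrow> vector_field A Y \<Longrightarrow> p X Y = pr X Y"
  shows "F_manifold A p e"
proof -
  have Lp: "Lie_mult A p Z X Y = L Z X Y"
    if "vector_field A Z" "vector_field A X" "vector_field A Y" for Z X Y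
    using that unfolding Lie_mult_eq by (simp add: p)
  show ?thesis unfolding F_manifold_def
  proof (intro conjI allI impI ballI)
    fix g X Y Z assume "g \<in> Cinf A" "vector_field A X" "vector_field A Y" "vector_field A Z"
    thus "p (vadd (fscale A g X) Y) Z = vadd (fscale A g (p X Z)) (p Y Z)"
      using pr_linear[of g X Y Z] by (simp add: p vadd_eq_plus)
  next
    fix X Y Z W assume "vector_field A X" "vector_field A Y" "vector_field A Z" "vector_field A W"
    thus "Lie_mult A p (p X Y) Z W = vadd (p X (Lie_mult A p Y Z W)) (p Y (Lie_mult A p X Z W))"
      by (simp add: p Lp F_identity_plus vadd_eq_plus)
  qed (auto simp: p pr_ring)
qed

end

section \<open>An invertible vector field and its dual product\<close>

locale FM_inv = FM +
  fixes E P :: "'a vfield"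
  assumes E[simp]: "vector_field A E" and P[simp]: "vector_field A P" and EP: "pr E P = e"
begin

abbreviation star :: "'a vfield \<Rightarrow> 'a vfield \<Rightarrow> 'a vfield" where
  "star X Y \<equiv> pr (pr X Y) P"

lemma PE: "pr P E = e"
  using EP pr_comm[of P E] by simp

lemma pr_P_E_cancel: "vector_field A V \<Longrightarrow> pr P (pr E V) = V"
  using pr_assoc[of P E V, symmetric] PE by simp

lemma pr_E_P_cancel: "vector_field A V \<Longrightarrow> pr E (pr P V) = V"
  using pr_assoc[of E P V, symmetric] EP by simp

lemma pr_P_inj:
  assumes "vector_field A V1" "vector_field A V2" "pr P V1 = pr P V2"
  shows "V1 = V2"
proof -
  have "V1 = pr E (pr P V1)" using assms(1) by (rule pr_E_P_cancel[symmetric])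
  also have "\<dots> = pr E (pr P V2)" by (simp only: assms(3))
  also have "\<dots> = V2" using assms(2) by (rule pr_E_P_cancel)
  finally show ?thesis .
qed

lemma pr_E_inj:
  assumes "vector_field A V1" "vector_field A V2" "pr E V1 = pr E V2"
  shows "V1 = V2"
proof -
  have "V1 = pr P (pr E V1)" using assms(1) by (rule pr_P_E_cancel[symmetric])
  also have "\<dots> = pr P (pr E V2)" by (simp only: assms(3))
  also have "\<dots> = V2" using assms(2) by (rule pr_P_E_cancel)
  finally show ?thesis .
qed

lemma star_unit: "vector_field A X \<Longrightarrow> star E X = X"
  using pr_assoc[of E X P] pr_comm[of X P] pr_E_P_cancel[of X] by simp

text \<open>The inverse is unique, so the chosen inverse of E is P.\<close>
lemma vinv_eq: "vinv A pr e E = P"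
proof -
  have "\<exists>Y. vector_field A Y \<and> pr E Y = e" using EP P by blast
  hence "vector_field A (vinv A pr e E) \<and> pr E (vinv A pr e E) = e"
    unfolding vinv_def by (rule someI_ex)
  thus ?thesis using pr_E_inj[of "vinv A pr e E" P] EP by simp
qed

lemma dual_mult_eq: "dual_mult A pr e E = star"
  unfolding dual_mult_def vinv_eq ..

text \<open>L_P is determined by L_E: apply the F-identity to e = E o P and use L_e = 0.\<close>
lemma L_P:
  assumes U: "vector_field A U" and V: "vector_field A V"
  shows "L P U V = - pr (pr P P) (L E U V)"
proof -
  have "0 = pr E (L P U V) + pr P (L E U V)"
    using F_identity_plus[OF E P U V] L_unit_zero[OF U V] EP by simp
  hence "pr E (L P U V) = - pr P (L E U V)" by (simp add: eq_neg_iff_add_eq_0)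
  hence "pr P (pr E (L P U V)) = pr P (- pr P (L E U V))" by simp
  thus ?thesis using U V pr_P_E_cancel[of "L P U V"] by (simp add: pr_uminus_right pr_assoc)
qed

lemma L_star:
  assumes "vector_field A S" "vector_field A Z" "vector_field A W"
  shows "Lie_mult A star S Z W = L S (pr Z W) P + pr (L S Z W) P + pr (pr Z W) (lie A S P)"
  using assms unfolding Lie_mult_eq by (simp add: pr_ring algebra_simps)

lemma star_F_defect_L_P:
  assumes X: "vector_field A X" and Y: "vector_field A Y" and Z: "vector_field A Z"
    and W: "vector_field A W"
  shows "Lie_mult A star (star X Y) Z W
            - (star X (Lie_mult A star Y Z W) + star Y (Lie_mult A star X Z W))
       = pr (pr X Y) (L P (pr Z W) P) + pr (star X Y) (L P Z W)
           - pr (pr Z W) (L P (pr X Y) P) - pr (star Z W) (L P X Y)"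
proof -
  note vs = X Y Z W P
  have F_XYP: "L (star X Y) U V = pr (pr X Y) (L P U V) + pr P (pr X (L Y U V) + pr Y (L X U V))"
    if "vector_field A U" "vector_field A V" for U V
    using vs that by (simp add: F_identity_plus)
  have lie_XYP_P: "lie A (star X Y) P
      = - (L P (pr X Y) P + pr (L P X Y + pr (lie A P X) Y + pr X (lie A P Y)) P)"
    using vs unfolding Lie_mult_eq by (subst lie_antisym) (simp add: lie_self pr_ring algebra_simps)
  have lie_P: "lie A Y P = - lie A P Y" "lie A X P = - lie A P X" by (rule lie_antisym)+
  show ?thesis
    by (simp only: L_star vs pr_vf, simp only: F_XYP vs pr_vf lie_XYP_P lie_P)
      (use vs in \<open>simp add: pr_ring algebra_simps\<close>)
qed

definition obstruction :: "'a vfield \<Rightarrow> 'a vfield \<Rightarrow> 'a vfield \<Rightarrow> 'a vfield \<Rightarrow> 'a vfield" where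
  "obstruction X Y Z W = pr (pr X Y) (L E (pr Z W) P) + pr (star X Y) (L E Z W)
      - pr (pr Z W) (L E (pr X Y) P) - pr (star Z W) (L E X Y)"

lemma obstruction_vf:
  "vector_field A X \<Longrightarrow> vector_field A Y \<Longrightarrow> vector_field A Z \<Longrightarrow> vector_field A W \<Longrightarrow>
   vector_field A (obstruction X Y Z W)"
  unfolding obstruction_def by simp

text \<open>Since multiplication by P is injective, the F-identity for the dual product
  holds at (X,Y,Z,W) exactly when the obstruction vanishes there.\<close>
lemma star_F_identity_instance_iff:
  assumes X: "vector_field A X" and Y: "vector_field A Y" and Z: "vector_field A Z"
    and W: "vector_field A W"
  shows "Lie_mult A star (star X Y) Z W
            = vadd (star X (Lie_mult A star Y Z W)) (star Y (Lie_mult A star X Z W))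
         \<longleftrightarrow> obstruction X Y Z W = 0"
proof -
  have defect: "Lie_mult A star (star X Y) Z W
         - (star X (Lie_mult A star Y Z W) + star Y (Lie_mult A star X Z W))
       = - pr P (pr P (obstruction X Y Z W))"
    using assms unfolding star_F_defect_L_P[OF assms] obstruction_def
    by (simp add: L_P pr_ring algebra_simps)
  have "pr P (pr P (obstruction X Y Z W)) = 0 \<longleftrightarrow> obstruction X Y Z W = 0"
    using pr_P_inj[of "pr P (obstruction X Y Z W)" 0] pr_P_inj[of "obstruction X Y Z W" 0]
    by (auto simp: obstruction_vf assms pr_zero_right)
  thus ?thesis unfolding vadd_eq_plus using defect by (auto simp: right_minus_eq)
qed

lemma F_identity_star_iff:
  "F_identity A star \<longleftrightarrow>
     (\<forall>X Y Z W. vector_field A X \<longrightarrow> vector_field A Y \<longrightarrow> vector_field A Z \<longrightarrow> vector_field A W \<longrightarrow>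
        obstruction X Y Z W = 0)"
  unfolding F_identity_def using star_F_identity_instance_iff by blast

lemma obstruction_zero_if:
  assumes LE: "\<And>X Y. vector_field A X \<Longrightarrow> vector_field A Y \<Longrightarrow> L E X Y = pr (pr (lie A e E) X) Y"
    and vs: "vector_field A X" "vector_field A Y" "vector_field A Z" "vector_field A W"
  shows "obstruction X Y Z W = 0"
  unfolding obstruction_def using vs by (simp add: LE pr_ring algebra_simps)

lemma L_E_unit:
  assumes "vector_field A Z"
  shows "L E Z e = pr (lie A e E) Z" "L E e Z = pr (lie A e E) Z"
  using assms unfolding Lie_mult_eq lie_antisym[of A E e] by (simp_all add: pr_ring)

text \<open>Conversely, specializing the obstruction to the unit and to E recovers L_E:
  first L_E(Z,P) = P o Z o K with K = L_E(E,P), and then L_E(Z,W) = [e,E] o Z o W.\<close>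
lemma L_E_if_obstruction_zero:
  assumes Q0: "\<And>X Y Z W. vector_field A X \<Longrightarrow> vector_field A Y \<Longrightarrow> vector_field A Z \<Longrightarrow>
      vector_field A W \<Longrightarrow> obstruction X Y Z W = 0"
    and Z: "vector_field A Z" and W: "vector_field A W"
  shows "L E Z W = pr (pr (lie A e E) Z) W"
proof -
  define c where "c = lie A e E"
  have c: "vector_field A c" unfolding c_def by simp
  note L_E_unit' = L_E_unit[folded c_def]
  have symm: "pr X (L E V P) = pr V (L E X P)" if X: "vector_field A X" and V: "vector_field A V" for X V
  proof -
    have "obstruction X e V e = 0" using Q0 X V by simp
    thus ?thesis unfolding obstruction_def using X V c by (simp add: L_E_unit' pr_ring algebra_simps)
  qed
  define K where "K = L E E P"
  have K: "vector_field A K" unfolding K_def by simp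
  have L_E_P: "L E V P = pr (pr P V) K" if V: "vector_field A V" for V
  proof -
    have "pr E (pr (pr P V) K) = pr V K"
      using V K pr_assoc[of E "pr P V" K, symmetric] pr_E_P_cancel[of V] by simp
    hence "pr E (L E V P) = pr E (pr (pr P V) K)"
      using symm[OF E V] unfolding K_def[symmetric] by simp
    thus ?thesis by (rule pr_E_inj[rotated 2]) (use V K in simp_all)
  qed
  have "obstruction e e Z W = 0" using Q0 Z W by simp
  hence "pr P (L E Z W) = pr P (pr (pr Z W) c)"
    unfolding obstruction_def using Z W c K by (simp add: L_E_P L_E_unit' pr_ring algebra_simps)
  hence "L E Z W = pr (pr Z W) c" by (rule pr_P_inj[rotated 2]) (use Z W c in simp_all)
  thus ?thesis using Z W c by (simp add: c_def pr_ring)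
qed

lemma obstruction_zero_iff:
  "(\<forall>X Y Z W. vector_field A X \<longrightarrow> vector_field A Y \<longrightarrow> vector_field A Z \<longrightarrow>
       vector_field A W \<longrightarrow> obstruction X Y Z W = 0)
   \<longleftrightarrow> (\<forall>X Y. vector_field A X \<longrightarrow> vector_field A Y \<longrightarrow> L E X Y = pr (pr (lie A e E) X) Y)"
proof (intro iffI allI impI)
  fix X Y assume "\<forall>X Y Z W. vector_field A X \<longrightarrow> vector_field A Y \<longrightarrow> vector_field A Z \<longrightarrow>
       vector_field A W \<longrightarrow> obstruction X Y Z W = 0" "vector_field A X" "vector_field A Y"
  thus "L E X Y = pr (pr (lie A e E) X) Y" using L_E_if_obstruction_zero by blast
next
  fix X Y Z W assume "\<forall>X Y. vector_field A X \<longrightarrow> vector_field A Y \<longrightarrow> L E X Y = pr (pr (lie A e E) X) Y"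
    "vector_field A X" "vector_field A Y" "vector_field A Z" "vector_field A W"
  thus "obstruction X Y Z W = 0" using obstruction_zero_if by blast
qed

lemma F_manifold_star_iff: "F_manifold A star E \<longleftrightarrow> F_identity A star"
proof -
  have assoc: "\<forall>X Y Z. vector_field A X \<longrightarrow> vector_field A Y \<longrightarrow> vector_field A Z \<longrightarrow>
      star (star X Y) Z = star X (star Y Z)"
    by (simp add: pr_ring)
  have linear: "\<forall>g\<in>Cinf A. \<forall>X Y Z. vector_field A X \<longrightarrow> vector_field A Y \<longrightarrow> vector_field A Z \<longrightarrow>
      star (vadd (fscale A g X) Y) Z = vadd (fscale A g (star X Z)) (star Y Z)"
    by (simp add: pr_linear)
  show ?thesis unfolding F_manifold_iff using assoc linear star_unit by (simp add: pr_comm)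
qed

lemma eventual_identity_iff:
  "eventual_identity A pr e E \<longleftrightarrow>
     (\<forall>X Y. vector_field A X \<longrightarrow> vector_field A Y \<longrightarrow> L E X Y = pr (pr (lie A e E) X) Y)"
proof -
  have "invertible_vf A pr e E" unfolding invertible_vf_def using EP P E by blast
  thus ?thesis unfolding eventual_identity_def dual_mult_eq F_manifold_star_iff
      F_identity_star_iff obstruction_zero_iff by simp
qed

lemma star_unit_inverse: "star e (pr E E) = E"
proof -
  have "star e (pr E E) = pr (pr E E) P" using pr_unit[OF pr_vf[OF E E]] by (rule arg_cong)
  also have "\<dots> = pr E (pr E P)" by (rule pr_assoc) simp_all
  finally show ?thesis by (simp add: EP)
qed

lemma star_inverse_unit: "vinv A star E e = pr E E"
proof -
  have "vector_field A (pr E E) \<and> star e (pr E E) = E" using star_unit_inverse by simp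
  hence "vector_field A (vinv A star E e) \<and> star e (vinv A star E e) = E"
    unfolding vinv_def by (rule someI[where P = "\<lambda>Y. vector_field A Y \<and> star e Y = E"])
  hence Q: "vector_field A (vinv A star E e)" and "star e (vinv A star E e) = E" by (rule conjunct1, rule conjunct2)
  hence QE: "pr (vinv A star E e) P = E" by (simp only: pr_unit[OF Q])
  have "pr P (vinv A star E e) = pr (vinv A star E e) P" by (rule pr_comm[OF P Q])
  also have "\<dots> = pr P (pr E E)" unfolding QE by (rule pr_P_E_cancel[OF E, symmetric])
  finally show ?thesis by (rule pr_P_inj[OF Q pr_vf[OF E E]])
qed

lemma star_star_dual:
  assumes "vector_field A X" "vector_field A Y"
  shows "star (star X Y) (vinv A star E e) = pr X Y"
proof -
  define V where "V = pr X Y"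
  have V: "vector_field A V" unfolding V_def using assms by simp
  have "pr (pr V P) (pr E E) = pr V (pr P (pr E E))" using V by (simp add: pr_assoc)
  also have "\<dots> = pr V E" using pr_P_E_cancel[OF E] by simp
  finally have "star (star X Y) (pr E E) = pr (pr V E) P" unfolding V_def by simp
  also have "\<dots> = pr V (pr E P)" using V by (simp add: pr_assoc)
  finally show ?thesis using V unfolding star_inverse_unit EP V_def by simp
qed

lemma dual_eventual_identity:
  assumes "F_manifold A star E"
  shows "eventual_identity A star E e"
proof -
  have "invertible_vf A star E e" unfolding invertible_vf_def
  proof (intro conjI exI)
    show "vector_field A e" "vector_field A (pr E E)" "star e (pr E E) = E"
      by (simp_all only: unit_vf pr_vf[OF E E] star_unit_inverse)
  qed
  moreover have "F_manifold A (dual_mult A star E e) e"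
    by (rule F_manifold_cong) (simp add: dual_mult_def star_star_dual)
  ultimately show ?thesis using assms unfolding eventual_identity_def by simp
qed

end

theorem theorem1p3:
  fixes A :: "('a::{t2_space,second_countable_topology} set \<times> ('a \<Rightarrow> 'b::euclidean_space)) set"
    and pr :: "'a vfield \<Rightarrow> 'a vfield \<Rightarrow> 'a vfield"
    and e E :: "'a vfield"
  assumes F: "F_manifold A pr e"
    and inv: "invertible_vf A pr e E"
  shows "(eventual_identity A pr e E \<longleftrightarrow>
            (\<forall>X Y. vector_field A X \<longrightarrow> vector_field A Y \<longrightarrow>
               Lie_mult A pr E X Y = pr (pr (lie A e E) X) Y))
       \<and> (eventual_identity A pr e E \<longrightarrow>
            (let star = dual_mult A pr e E in
               eventual_identity A star E e \<and>
               (\<forall>X Y. vector_field A X \<longrightarrow> vector_field A Y \<longrightarrow>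
                  star (star X Y) (vinv A star E e) = pr X Y)))"
proof -
  obtain P where "vector_field A P" "pr E P = e" and E: "vector_field A E"
    using inv unfolding invertible_vf_def by blast
  then interpret FM_inv A pr e E P by (intro FM_inv.intro FM_inv_axioms.intro FM.intro F)
  have dual: "eventual_identity A star E e \<and>
      (\<forall>X Y. vector_field A X \<longrightarrow> vector_field A Y \<longrightarrow> star (star X Y) (vinv A star E e) = pr X Y)"
    if "eventual_identity A pr e E"
    using that dual_eventual_identity star_star_dual
    unfolding eventual_identity_def dual_mult_eq by blast
  show ?thesis unfolding Let_def dual_mult_eq using eventual_identity_iff dual by blast
qed

end
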